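(* Let $K_r,K_t,M_r,N_t$ be positive integers and $\kappa_t$ an integer with $0\le\kappa_t\le K_t-1$. For $j=1,\dots,K_r$ and $k=1,\dots,K_t$ let $\mathbf{H}_{jk}\in\mathbb{C}^{M_r\times N_t}$ be random matrices whose entries are i.i.d. zero-mean unit-variance circularly symmetric complex Gaussian random variables, and let $\gamma^{j}_{ik}$, $i=1,\dots,K_t-\kappa_t$, $j=1,\dots,K_r$, $k=1,\dots,K_t$, be i.i.d. random scalars drawn from a continuous distribution, independent of the channel matrices. Let $\mathbf{C}$ be the $K_r(K_t-\kappa_t)M_r\times K_tN_t$ block matrix whose block rows are indexed by pairs $(j,i)$, ordered with $j=1,\dots,K_r$ as the outer index and $i=1,\dots,K_t-\kappa_t$ as the inner index, whose block columns are indexed by $k=1,\dots,K_t$, and whose $((j,i),k)$ block is $\gamma^{j}_{ik}\mathbf{H}_{jk}$. If $N_t\le K_rM_r$, then almost surely \[ \operatorname{rank}(\mathbf{C})=\min\big(K_r(K_t-\kappa_t)M_r,\;K_tN_t\big). \] *)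

theory Defs
  imports "HOL-Probability.Probability" "Jordan_Normal_Form.DL_Rank"
begin

text \<open>Block matrix C (0-based indices). Row index r corresponds to the triple (j,i,a) with
  j < Kr the outer block-row index, i < Kt - kappa the inner block-row index and a < Mr the row
  inside the block: r = (j*(Kt-kappa) + i)*Mr + a. Column index c corresponds to (k,b) with
  c = k*Nt + b.\<close>
definition blockC ::
  "nat \<Rightarrow> nat \<Rightarrow> nat \<Rightarrow> nat \<Rightarrow> nat \<Rightarrow> (nat \<Rightarrow> nat \<Rightarrow> nat \<Rightarrow> nat \<Rightarrow> complex)
   \<Rightarrow> (nat \<Rightarrow> nat \<Rightarrow> nat \<Rightarrow> complex) \<Rightarrow> complex Matrix.mat" where
  "blockC Kr Kt Mr Nt \<kappa> H g =
     Matrix.mat (Kr * (Kt - \<kappa>) * Mr) (Kt * Nt)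
       (\<lambda>(r, c). let j = r div ((Kt - \<kappa>) * Mr);
                     i = (r mod ((Kt - \<kappa>) * Mr)) div Mr;
                     a = r mod Mr;
                     k = c div Nt;
                     b = c mod Nt
                 in g i j k * H j k a b)"

definition mat_rank :: "complex Matrix.mat \<Rightarrow> nat" where
  "mat_rank A = vec_space.rank (dim_row A) A"

text \<open>Standard circularly-symmetric complex Gaussian (zero mean, E|z|^2 = 1):
  real and imaginary parts independent, each N(0, 1/2).\<close>
definition std_circ_gaussian :: "'w measure \<Rightarrow> ('w \<Rightarrow> complex) \<Rightarrow> bool" where
  "std_circ_gaussian M Z \<longleftrightarrow>
     distributed M lborel (\<lambda>w. Re (Z w)) (normal_density 0 (sqrt (1/2))) \<and>
     distributed M lborel (\<lambda>w. Im (Z w)) (normal_density 0 (sqrt (1/2))) \<and>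
     prob_space.indep_var M borel (\<lambda>w. Re (Z w)) borel (\<lambda>w. Im (Z w))"

end

theory Submission
  imports Defs "Jordan_Normal_Form.DL_Rank_Submatrix"
begin

text \<open>Every maximal minor of \<open>C\<close> is a polynomial in the entries of the \<open>H\<^sub>j\<^sub>k\<close> and the
  \<open>\<gamma>\<close>. A function that is polynomial in each variable separately and nonzero at one point
  vanishes only on a null set of any product of atomless probability measures: for fixed values of
  the other variables its zero set in the last one is finite, and Fubini does the rest. By
  independence the joint law of all entries is such a product, so it suffices to exhibit a single
  choice of \<open>H\<close> and \<open>\<gamma>\<close> for which one fixed minor of order
  \<open>min (K\<^sub>r(K\<^sub>t-\<kappa>\<^sub>t)M\<^sub>r) (K\<^sub>tN\<^sub>t)\<close> is nonzero. For a suitable 0-1 choice that minor is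
  triangular after reordering its columns.\<close>

section \<open>Functions polynomial in each variable\<close>

definition separately_poly :: "'i set \<Rightarrow> (('i \<Rightarrow> 'a::comm_semiring_1) \<Rightarrow> 'a) \<Rightarrow> bool" where
  "separately_poly I F \<longleftrightarrow> (\<forall>v\<in>I. \<forall>x. \<exists>p. \<forall>t. F (x(v := t)) = poly p t)"

lemma separately_poly_const [intro]: "separately_poly I (\<lambda>x. c)"
  unfolding separately_poly_def by (intro ballI allI exI[of _ "[:c:]"]) simp

lemma separately_poly_var [intro]: "separately_poly I (\<lambda>x :: 'i \<Rightarrow> 'a::comm_semiring_1. x u)"
  unfolding separately_poly_def
proof (intro ballI allI)
  fix v and x :: "'i \<Rightarrow> 'a::comm_semiring_1"
  show "\<exists>p. \<forall>t. (x(v := t)) u = poly p t"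
  proof (cases "v = u")
    case True
    then have "\<forall>t. (x(v := t)) u = poly [:0, 1:] t" by simp
    then show ?thesis ..
  next
    case False
    then have "\<forall>t. (x(v := t)) u = poly [:x u:] t" by simp
    then show ?thesis ..
  qed
qed

lemma separately_poly_add [intro]:
  assumes "separately_poly I F" "separately_poly I G"
  shows "separately_poly I (\<lambda>x. F x + G x)"
  unfolding separately_poly_def
proof (intro ballI allI)
  fix v x assume "v \<in> I"
  then obtain p q where "\<forall>t. F (x(v := t)) = poly p t" "\<forall>t. G (x(v := t)) = poly q t"
    using assms unfolding separately_poly_def by meson
  then show "\<exists>r. \<forall>t. F (x(v := t)) + G (x(v := t)) = poly r t"
    by (intro exI[of _ "p + q"]) simp
qed

lemma separately_poly_mult [intro]:
  assumes "separately_poly I F" "separately_poly I G"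
  shows "separately_poly I (\<lambda>x. F x * G x)"
  unfolding separately_poly_def
proof (intro ballI allI)
  fix v x assume "v \<in> I"
  then obtain p q where "\<forall>t. F (x(v := t)) = poly p t" "\<forall>t. G (x(v := t)) = poly q t"
    using assms unfolding separately_poly_def by meson
  then show "\<exists>r. \<forall>t. F (x(v := t)) * G (x(v := t)) = poly r t"
    by (intro exI[of _ "p * q"]) simp
qed

lemma separately_poly_sum:
  "finite S \<Longrightarrow> (\<And>s. s \<in> S \<Longrightarrow> separately_poly I (F s)) \<Longrightarrow>
    separately_poly I (\<lambda>x. \<Sum>s\<in>S. F s x)"
  by (induction S rule: finite_induct) auto

lemma separately_poly_prod:
  fixes F :: "'s \<Rightarrow> ('i \<Rightarrow> 'a::comm_semiring_1) \<Rightarrow> 'a"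
  shows "finite S \<Longrightarrow> (\<And>s. s \<in> S \<Longrightarrow> separately_poly I (F s)) \<Longrightarrow>
    separately_poly I (\<lambda>x. \<Prod>s\<in>S. F s x)"
  by (induction S rule: finite_induct) auto

lemma separately_poly_mono:
  "separately_poly J F \<Longrightarrow> I \<subseteq> J \<Longrightarrow> separately_poly I F"
  unfolding separately_poly_def by blast

lemma separately_poly_fun_upd:
  assumes "separately_poly I F"
  shows "separately_poly I (\<lambda>x. F (x(v := c)))"
  unfolding separately_poly_def
proof (intro ballI allI)
  fix u x assume "u \<in> I"
  show "\<exists>p. \<forall>t. F (x(u := t, v := c)) = poly p t"
  proof (cases "u = v")
    case True
    then have "\<forall>t. F (x(u := t, v := c)) = poly [:F (x(v := c)):] t" by simp
    then show ?thesis ..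
  next
    case False
    obtain p where "\<forall>t. F ((x(v := c))(u := t)) = poly p t"
      using assms \<open>u \<in> I\<close> unfolding separately_poly_def by blast
    with False show ?thesis by (metis fun_upd_twist)
  qed
qed

lemma det_mat_eq_sum_permutations:
  "det (Matrix.mat n n (\<lambda>(i, j). E i j)) =
     (\<Sum>p\<in>{p. p permutes {0..<n}}. signof p * (\<Prod>i = 0..<n. E i (p i)))"
  by (subst det_def'[of _ n]) (auto intro!: sum.cong prod.cong simp: permutes_in_image)

lemma separately_poly_det:
  fixes E :: "('i \<Rightarrow> 'a::comm_ring_1) \<Rightarrow> nat \<Rightarrow> nat \<Rightarrow> 'a"
  assumes "\<And>i j. i < n \<Longrightarrow> j < n \<Longrightarrow> separately_poly I (\<lambda>x. E x i j)"
  shows "separately_poly I (\<lambda>x. det (Matrix.mat n n (\<lambda>(i, j). E x i j)))"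
  unfolding det_mat_eq_sum_permutations
  by (intro separately_poly_sum separately_poly_mult separately_poly_const separately_poly_prod
      assms finite_permutations) (auto simp: permutes_in_image)

lemma borel_measurable_det:
  fixes E :: "'b \<Rightarrow> nat \<Rightarrow> nat \<Rightarrow> 'a::{comm_ring_1, real_normed_field, second_countable_topology}"
  assumes "\<And>i j. i < n \<Longrightarrow> j < n \<Longrightarrow> (\<lambda>x. E x i j) \<in> borel_measurable N"
  shows "(\<lambda>x. det (Matrix.mat n n (\<lambda>(i, j). E x i j))) \<in> borel_measurable N"
  unfolding det_mat_eq_sum_permutations
  by (intro borel_measurable_sum borel_measurable_times borel_measurable_const
      borel_measurable_prod assms) (auto simp: permutes_in_image)

lemma AE_poly_nonzero:
  fixes p :: "'a::{idom, t1_space} poly"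
  assumes "p \<noteq> 0" "sets D = sets borel" "\<And>z. emeasure D {z} = 0"
  shows "AE t in D. poly p t \<noteq> 0"
proof -
  have "AE t in D. \<forall>z\<in>{z. poly p z = 0}. t \<noteq> z"
  proof (rule eventually_ball_finite[OF poly_roots_finite[OF assms(1)]], intro ballI)
    fix z
    have "{z} \<in> null_sets D" using assms(2,3) by (auto simp: null_sets_def)
    then show "AE t in D. t \<noteq> z" using AE_not_in by fastforce
  qed
  then show ?thesis by eventually_elim auto
qed

lemma AE_PiM_insertI:
  assumes "\<And>i. i \<in> I \<Longrightarrow> prob_space (D i)" "prob_space (D v)"
    and P: "Measurable.pred (PiM (insert v I) D) P"
    and "AE X in PiM I D. AE t in D v. P (X(v := t))"
  shows "AE x in PiM (insert v I) D. P x"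
proof -
  interpret Dv: prob_space "D v" by fact
  interpret PI: prob_space "PiM I D" using assms(1) by (rule prob_space_PiM)
  interpret pair_sigma_finite "D v" "PiM I D" ..
  have upd: "(\<lambda>(t, X). X(v := t)) \<in> measurable (D v \<Otimes>\<^sub>M PiM I D) (PiM (insert v I) D)"
    by measurable
  have P_upd: "Measurable.pred (D v \<Otimes>\<^sub>M PiM I D) (\<lambda>(t, X). P (X(v := t)))"
    using measurable_compose[OF upd P] by (simp add: case_prod_beta')
  have "AE t in D v. AE X in PiM I D. P (X(v := t))"
    using AE_commute[of "\<lambda>t X. P (X(v := t))"] assms(4) P_upd by simp
  then have "AE y in D v \<Otimes>\<^sub>M PiM I D. P ((snd y)(v := fst y))"
    using AE_pair_iff[of "\<lambda>t X. P (X(v := t))"] P_upd by (simp add: case_prod_beta')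
  then have "AE x in distr (D v \<Otimes>\<^sub>M PiM I D) (PiM (insert v I) D) (\<lambda>(t, X). X(v := t)). P x"
    using P by (subst AE_distr_iff[OF upd]) (auto simp: case_prod_beta')
  then show ?thesis
    by (simp only: distr_pair_PiM_eq_PiM assms)
qed

lemma AE_PiM_nonzero_if_separately_poly:
  fixes F :: "('i \<Rightarrow> 'a::{idom, t1_space}) \<Rightarrow> 'a"
  assumes "finite I"
    and "\<And>i. i \<in> I \<Longrightarrow> prob_space (D i)" "\<And>i. i \<in> I \<Longrightarrow> sets (D i) = sets borel"
    and "\<And>i z. i \<in> I \<Longrightarrow> emeasure (D i) {z} = 0"
    and "separately_poly I F" "F \<in> borel_measurable (PiM I D)"
    and "x0 \<in> space (PiM I D)" "F x0 \<noteq> 0"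
  shows "AE x in PiM I D. F x \<noteq> 0"
  using assms
proof (induction I arbitrary: F x0 rule: finite_induct)
  case empty
  then have "x0 = (\<lambda>_. undefined)" by (simp add: space_PiM)
  with empty show ?case unfolding PiM_empty AE_count_space by simp
next
  case (insert v I)
  have Dv: "sets (D v) = sets borel" "\<And>z. emeasure (D v) {z} = 0" using insert.prems by auto
  have "space (D v) = UNIV" using sets_eq_imp_space_eq[OF Dv(1)] by simp
  have x0_upd: "(restrict x0 I)(v := x0 v) = x0"
    using insert.prems(6) by (auto simp: space_PiM PiE_def extensional_def fun_eq_iff)
  have "(\<lambda>X. X(v := x0 v)) \<in> measurable (PiM I D) (PiM (insert v I) D)"
    by measurable (simp add: \<open>space (D v) = UNIV\<close>)
  then have meas: "(\<lambda>X. F (X(v := x0 v))) \<in> borel_measurable (PiM I D)"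
    using insert.prems(5) by (rule measurable_compose)
  have "AE X in PiM I D. F (X(v := x0 v)) \<noteq> 0"
  proof (rule insert.IH[of _ "restrict x0 I"])
    show "separately_poly I (\<lambda>X. F (X(v := x0 v)))"
      using separately_poly_mono[OF insert.prems(4)] by (intro separately_poly_fun_upd) blast
    show "restrict x0 I \<in> space (PiM I D)"
      using insert.prems(6) by (auto simp: space_PiM)
    show "F ((restrict x0 I)(v := x0 v)) \<noteq> 0"
      using insert.prems(7) x0_upd by simp
    show "\<And>i. i \<in> I \<Longrightarrow> prob_space (D i)" "\<And>i. i \<in> I \<Longrightarrow> sets (D i) = sets borel"
      "\<And>i z. i \<in> I \<Longrightarrow> emeasure (D i) {z} = 0"
      using insert.prems(1-3) by blast+
  qed (fact meas)
  then have "AE X in PiM I D. AE t in D v. F (X(v := t)) \<noteq> 0"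
  proof eventually_elim
    case (elim X)
    obtain p where p: "\<forall>t. F (X(v := t)) = poly p t"
      using insert.prems(4) unfolding separately_poly_def by blast
    with elim have "p \<noteq> 0" by auto
    from AE_poly_nonzero[OF this Dv] show ?case by (simp add: p)
  qed
  moreover have "Measurable.pred (PiM (insert v I) D) (\<lambda>x. F x \<noteq> 0)"
    using insert.prems(5) by measurable
  ultimately show ?case
    using insert.prems(1) by (intro AE_PiM_insertI) blast+
qed

section \<open>Minors and rank\<close>

lemma pick_lessThan: "j < m \<Longrightarrow> pick {..<m} j = (j::nat)"
proof -
  assume "j < m"
  have "{a. a < m \<and> a \<in> UNIV} = {..<m}" by auto
  with \<open>j < m\<close> show ?thesis
    using pick_reduce_set[of j m UNIV] by (simp add: pick_UNIV)
qed

lemma submatrix_mat_lessThan: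
  assumes "R \<subseteq> {..<nr}" "card R = m" "m \<le> nc"
  shows "submatrix (Matrix.mat nr nc f) R {..<m} = Matrix.mat m m (\<lambda>(i, j). f (pick R i, j))"
proof -
  have "{i. i < nr \<and> i \<in> R} = R" "{j. j < nc \<and> j \<in> {..<m}} = {..<m}"
    using assms by auto
  then have rows: "card {i. i < nr \<and> i \<in> R} = m" and cols: "card {j. j < nc \<and> j \<in> {..<m}} = m"
    using assms(2) by simp_all
  have "pick R i < nr" if "i < m" for i
    using that rows by (intro pick_le) simp
  then show ?thesis
    using rows cols assms(3) by (intro eq_matI) (auto simp: submatrix_index dim_submatrix pick_lessThan)
qed

lemma det_ne_0_if_triangular_wrt:
  fixes A :: "'a::field mat" and key :: "nat \<Rightarrow> 'k::wellorder"
  assumes A: "A \<in> carrier_mat n n"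
    and diag: "\<And>c. c < n \<Longrightarrow> \<sigma> c < n \<and> A $$ (\<sigma> c, c) \<noteq> 0"
    and below: "\<And>c c'. c < n \<Longrightarrow> c' < n \<Longrightarrow> c' \<noteq> c \<Longrightarrow> A $$ (\<sigma> c, c') \<noteq> 0 \<Longrightarrow> key c' < key c"
  shows "det A \<noteq> 0"
proof
  assume "det A = 0"
  then obtain v where v: "v \<in> carrier_vec n" "v \<noteq> 0\<^sub>v n" "A *\<^sub>v v = 0\<^sub>v n"
    using det_0_iff_vec_prod_zero_field[OF A] by auto
  have "v $ c = 0" if "c < n" for c
    using that
  proof (induction "key c" arbitrary: c rule: less_induct)
    case less
    have "A $$ (\<sigma> c, c') * v $ c' = 0" if "c' \<in> {..<n} - {c}" for c'
      using that less.hyps below[OF less.prems, of c'] by fastforce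
    then have "(\<Sum>c'\<in>{..<n} - {c}. A $$ (\<sigma> c, c') * v $ c') = 0"
      by (rule sum.neutral[rule_format])
    then have "(\<Sum>c'<n. A $$ (\<sigma> c, c') * v $ c') = A $$ (\<sigma> c, c) * v $ c"
      using less.prems by (subst sum.remove[of _ c]) auto
    moreover have "(\<Sum>c'<n. A $$ (\<sigma> c, c') * v $ c') = (A *\<^sub>v v) $ \<sigma> c"
      using A v(1) diag[OF less.prems] by (auto simp: scalar_prod_def lessThan_atLeast0 intro: sum.cong)
    ultimately show ?case using v(3) diag[OF less.prems] by simp
  qed
  with v(1) have "v = 0\<^sub>v n" by (intro eq_vecI) auto
  with v(2) show False ..
qed

lemma (in vec_space) rank_le_nr:
  assumes "A \<in> carrier_mat n nc" shows "rank A \<le> n"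
proof -
  have "set (cols A) \<subseteq> carrier_vec n" using cols_dim[of A] assms by auto
  then have "subspace class_ring (span (set (cols A))) V" by (rule span_is_subspace)
  from subspace_dim[OF this fin_dim fin_dim_span_cols[OF assms]] show ?thesis
    unfolding rank_def dim_is_n by simp
qed

lemma mat_rank_eq_min_if_det_submatrix_ne_0:
  assumes "A \<in> carrier_mat nr nc" "det (submatrix A R {..<min nr nc}) \<noteq> 0"
  shows "mat_rank A = min nr nc"
proof -
  have "{j. j < nc \<and> j \<in> {..<min nr nc}} = {..<min nr nc}" by auto
  then have "min nr nc \<le> vec_space.rank nr A"
    using vec_space.rank_gt_minor[OF assms] by simp
  moreover have "vec_space.rank nr A \<le> nr" "vec_space.rank nr A \<le> nc"
    using vec_space.rank_le_nr vec_space.rank_le_nc assms(1) by blast+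
  ultimately show ?thesis
    using assms(1) unfolding mat_rank_def by auto
qed

section \<open>Atomless laws and independence\<close>

lemma emeasure_singleton_eq_0_if_Re_distributed:
  assumes "distributed M lborel (\<lambda>w. Re (Z w)) f"
  shows "emeasure M {w \<in> space M. Z w = z} = 0"
proof -
  have "(\<lambda>w. Re (Z w)) \<in> borel_measurable M"
    using distributed_measurable[OF assms] by simp
  then have "emeasure M {w \<in> space M. Z w = z} \<le> emeasure M ((\<lambda>w. Re (Z w)) -` {Re z} \<inter> space M)"
    by (intro emeasure_mono) auto
  also have "\<dots> = (\<integral>\<^sup>+x. f x * indicator {Re z} x \<partial>lborel)"
    using assms by (rule distributed_emeasure) simp
  also have "\<dots> = 0"
    using AE_lborel_singleton[of "Re z"] by (intro nn_integral_zero') (auto elim!: eventually_mono)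
  finally show ?thesis by simp
qed

lemma std_circ_gaussian_atomless:
  "std_circ_gaussian M Z \<Longrightarrow> emeasure M {w \<in> space M. Z w = z} = 0"
  unfolding std_circ_gaussian_def by (blast intro: emeasure_singleton_eq_0_if_Re_distributed)

lemma emeasure_distr_singleton:
  fixes X :: "'a \<Rightarrow> 'b::t1_space"
  shows "X \<in> borel_measurable M \<Longrightarrow> emeasure (distr M borel X) {z} = emeasure M {w \<in> space M. X w = z}"
  by (subst emeasure_distr) (auto intro: borel_closed intro!: arg_cong[where f = "emeasure M"])

lemma (in prob_space) AE_indep_vars_of_AE_PiM:
  assumes "indep_vars M' X I" "I \<noteq> {}"
    and P: "Measurable.pred (PiM I M') P"
    and "AE x in PiM I (\<lambda>i. distr M (M' i) (X i)). P x"
  shows "AE w in M. P (\<lambda>i\<in>I. X i w)"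
proof -
  have rv: "\<And>i. i \<in> I \<Longrightarrow> X i \<in> measurable M (M' i)"
    using assms(1) unfolding indep_vars_def2 by auto
  then have "distr M (PiM I M') (\<lambda>w. \<lambda>i\<in>I. X i w) = PiM I (\<lambda>i. distr M (M' i) (X i))"
    using indep_vars_iff_distr_eq_PiM'[OF assms(2) rv] assms(1) by simp
  moreover have "(\<lambda>w. \<lambda>i\<in>I. X i w) \<in> measurable M (PiM I M')"
    using rv by (intro measurable_restrict) auto
  ultimately show ?thesis
    using assms(4) AE_distr_iff[OF _ predE[OF P]] by metis
qed

lemma borel_measurable_PiM_component:
  "(\<lambda>x. x u) \<in> borel_measurable (PiM I (\<lambda>_. borel :: 'a::topological_space measure))"
proof (cases "u \<in> I")
  case True
  then show ?thesis by measurable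
next
  case False
  have "(\<lambda>x. undefined :: 'a) \<in> borel_measurable (PiM I (\<lambda>_. borel))" by simp
  then show ?thesis
    by (rule measurable_cong[THEN iffD1, rotated]) (use False in \<open>auto simp: space_PiM PiE_def extensional_def\<close>)
qed

definition blockC_entry ::
  "nat \<Rightarrow> nat \<Rightarrow> nat \<Rightarrow> (nat \<Rightarrow> nat \<Rightarrow> nat \<Rightarrow> nat \<Rightarrow> 'a) \<Rightarrow> (nat \<Rightarrow> nat \<Rightarrow> nat \<Rightarrow> 'a) \<Rightarrow>
    nat \<Rightarrow> nat \<Rightarrow> 'a::times" where
  "blockC_entry L Mr Nt H g r c =
     g ((r mod (L * Mr)) div Mr) (r div (L * Mr)) (c div Nt) *
     H (r div (L * Mr)) (c div Nt) (r mod Mr) (c mod Nt)"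

lemma blockC_eq_mat:
  "blockC Kr Kt Mr Nt \<kappa> H g =
     Matrix.mat (Kr * (Kt - \<kappa>) * Mr) (Kt * Nt) (\<lambda>(r, c). blockC_entry (Kt - \<kappa>) Mr Nt H g r c)"
  unfolding blockC_def blockC_entry_def Let_def by (simp add: case_prod_beta')

lemma blockC_index_bounds:
  fixes r c :: nat
  assumes "r < Kr * L * Mr" "c < Kt * Nt"
  shows "r div (L * Mr) < Kr" "(r mod (L * Mr)) div Mr < L" "r mod Mr < Mr"
    "c div Nt < Kt" "c mod Nt < Nt"
proof -
  have "L * Mr > 0" "Nt > 0"
    using assms by (metis mult.assoc mult_0_right not_less_zero neq0_conv)+
  then show "r div (L * Mr) < Kr" "(r mod (L * Mr)) div Mr < L" "r mod Mr < Mr"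
    "c div Nt < Kt" "c mod Nt < Nt"
    using assms by (auto simp: less_mult_imp_div_less mult.commute[of Kr] mult.assoc)
qed

lemma blockC_cong:
  assumes "\<And>j k a b. j < Kr \<Longrightarrow> k < Kt \<Longrightarrow> a < Mr \<Longrightarrow> b < Nt \<Longrightarrow> H j k a b = H' j k a b"
    and "\<And>i j k. i < Kt - \<kappa> \<Longrightarrow> j < Kr \<Longrightarrow> k < Kt \<Longrightarrow> g i j k = g' i j k"
  shows "blockC Kr Kt Mr Nt \<kappa> H g = blockC Kr Kt Mr Nt \<kappa> H' g'"
  unfolding blockC_eq_mat
  by (intro eq_matI) (auto simp: blockC_entry_def assms blockC_index_bounds)

section \<open>A realisation of full rank\<close>

text \<open>Column \<open>c < m\<close> of \<open>C\<close> belongs to transmitter \<open>c div Nt\<close>; it is written as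
  \<open>c = (segment c * Mr + antenna c) * Kr + receiver c\<close> and matched with the row
  \<open>row_of c\<close>, antenna \<open>antenna c\<close> of block row \<open>(receiver c, segment c)\<close>. The witness channel \<open>H0\<close> connects
  exactly these antennas, and \<open>g0\<close> switches on the block \<open>(i, j, k)\<close> iff transmitter \<open>k\<close>
  owns a column matched with receiver \<open>j\<close> and segment \<open>i\<close>.\<close>

locale blockC_witness =
  fixes Kr Kt Mr Nt L :: nat
  assumes Kr_pos: "Kr > 0" and Mr_pos: "Mr > 0" and Nt_pos: "Nt > 0"
    and Nt_le: "Nt \<le> Kr * Mr"
begin

definition "m = min (Kr * L * Mr) (Kt * Nt)"

definition "receiver c = c mod Kr"
definition "antenna c = (c div Kr) mod Mr"
definition "segment c = (c div Kr) div Mr"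
definition "transmitter c = c div Nt"
definition "row_of c = (receiver c * L + segment c) * Mr + antenna c"

lemma div_Kr_eq: "c div Kr = segment c * Mr + antenna c"
  unfolding segment_def antenna_def by simp

lemma receiver_lt: "receiver c < Kr"
  unfolding receiver_def using Kr_pos by simp

lemma antenna_lt: "antenna c < Mr"
  unfolding antenna_def using Mr_pos by simp

lemma segment_lt: "c < m \<Longrightarrow> segment c < L"
  unfolding m_def segment_def
  by (simp add: less_mult_imp_div_less mult.commute[of Kr] mult.assoc)

lemma segment_mono: "c \<le> c' \<Longrightarrow> segment c \<le> segment c'"
  unfolding segment_def by (intro div_le_mono)

lemma transmitter_mono: "c \<le> c' \<Longrightarrow> transmitter c \<le> transmitter c'"
  unfolding transmitter_def by (rule div_le_mono)

lemma eq_if_same_div_Kr: "c div Kr = c' div Kr \<Longrightarrow> receiver c = receiver c' \<Longrightarrow> c = c'"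
  unfolding receiver_def by (metis div_mult_mod_eq)

lemma row_of_decode:
  assumes "c < m"
  shows "row_of c div (L * Mr) = receiver c" "(row_of c mod (L * Mr)) div Mr = segment c"
    "row_of c mod Mr = antenna c"
proof -
  have inner: "segment c * Mr + antenna c < L * Mr"
  proof -
    have "Suc (segment c) * Mr \<le> L * Mr" using segment_lt[OF assms] by (intro mult_le_mono1) simp
    then show ?thesis using antenna_lt[of c] by simp
  qed
  have row_of: "row_of c = receiver c * (L * Mr) + (segment c * Mr + antenna c)"
    unfolding row_of_def by (simp add: algebra_simps)
  have "L * Mr > 0" using inner by linarith
  then show "row_of c div (L * Mr) = receiver c" "(row_of c mod (L * Mr)) div Mr = segment c"
    using inner antenna_lt[of c] Mr_pos unfolding row_of by simp_all
  show "row_of c mod Mr = antenna c"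
    using antenna_lt[of c] unfolding row_of_def by simp
qed

lemma row_of_lt: assumes "c < m" shows "row_of c < Kr * L * Mr"
proof -
  have "row_of c div (L * Mr) < Kr" using row_of_decode(1)[OF assms] receiver_lt by simp
  moreover have "L * Mr > 0" using segment_lt[OF assms] Mr_pos by simp
  ultimately show ?thesis by (simp add: div_less_iff_less_mult mult.assoc)
qed

lemma inj_on_row_of: "inj_on row_of {..<m}"
proof (rule inj_onI)
  fix c c' assume "c \<in> {..<m}" "c' \<in> {..<m}" "row_of c = row_of c'"
  then have "receiver c = receiver c'" "segment c = segment c'" "antenna c = antenna c'"
    using row_of_decode[of c] row_of_decode[of c'] by auto
  then show "c = c'" using div_Kr_eq eq_if_same_div_Kr by metis
qed

lemma div_Kr_close_if_same_transmitter:
  assumes "transmitter c1 = transmitter c2" "receiver c1 = receiver c2"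
  shows "c1 div Kr < c2 div Kr + Mr"
proof -
  have "c1 div Nt * Nt = c2 div Nt * Nt" using assms(1) unfolding transmitter_def by simp
  then have "c1 < c2 + Nt"
    using div_mult_mod_eq[of c1 Nt] div_mult_mod_eq[of c2 Nt] mod_less_divisor[OF Nt_pos, of c1]
    by linarith
  then have "c1 div Kr * Kr + receiver c1 < c2 div Kr * Kr + receiver c2 + Kr * Mr"
    using Nt_le unfolding receiver_def by simp
  then have "c1 div Kr * Kr < (c2 div Kr + Mr) * Kr"
    using assms(2) by (simp add: algebra_simps)
  then show ?thesis by simp
qed

lemma segment_le_Suc_if_same_transmitter:
  assumes "transmitter c1 = transmitter c2" "receiver c1 = receiver c2"
  shows "segment c1 \<le> Suc (segment c2)"
proof -
  have "c1 div Kr \<le> c2 div Kr + Mr"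
    using div_Kr_close_if_same_transmitter[OF assms] by simp
  then have "segment c1 \<le> (c2 div Kr + Mr) div Mr"
    unfolding segment_def by (rule div_le_mono)
  then show ?thesis using Mr_pos unfolding segment_def by simp
qed

definition "has_next c \<longleftrightarrow>
  (\<exists>c''<m. transmitter c'' = transmitter c \<and> receiver c'' = receiver c \<and> segment c'' = Suc (segment c))"
definition "has_prev c \<longleftrightarrow>
  (\<exists>c''<m. transmitter c'' = transmitter c \<and> receiver c'' = receiver c \<and> Suc (segment c'') = segment c)"

lemma not_has_next_and_has_prev: "\<not> (has_next c \<and> has_prev c)"
proof
  assume "has_next c \<and> has_prev c"
  then obtain c1 c2 where
    "transmitter c1 = transmitter c" "receiver c1 = receiver c" "segment c1 = Suc (segment c)"
    "transmitter c2 = transmitter c" "receiver c2 = receiver c" "Suc (segment c2) = segment c"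
    unfolding has_next_def has_prev_def by blast
  with segment_le_Suc_if_same_transmitter[of c1 c2] show False by simp
qed

text \<open>Since a transmitter owns at most \<open>Nt \<le> Kr * Mr\<close> consecutive columns, the row of \<open>c\<close> meets
  no other column than those of the same receiver and antenna in a neighbouring segment.
  Ordering the columns by \<open>key\<close> (first those with a next segment in their own transmitter, by
  increasing segment, then those with a previous one, by decreasing segment, then the rest)
  makes the witness minor triangular.\<close>

definition "key c = (if has_next c then segment c else if has_prev c then 2 * L - segment c else 3 * L)"

definition H0 :: "nat \<Rightarrow> nat \<Rightarrow> nat \<Rightarrow> nat \<Rightarrow> 'a::field" where "H0 j k a b =
  (if b < Nt \<and> k * Nt + b < m \<and> receiver (k * Nt + b) = j \<and> antenna (k * Nt + b) = a then 1 else 0)"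
definition g0 :: "nat \<Rightarrow> nat \<Rightarrow> nat \<Rightarrow> 'a::field" where "g0 i j k = (if \<exists>c<m. transmitter c = k \<and> receiver c = j \<and> segment c = i then 1 else 0)"
definition "R = row_of ` {..<m}"

lemma witness_entry:
  assumes "c < m" "c' < m"
  shows "blockC_entry L Mr Nt H0 g0 (row_of c) c' =
    g0 (segment c) (receiver c) (transmitter c') * (if receiver c' = receiver c \<and> antenna c' = antenna c then 1 else 0)"
proof -
  have "c' div Nt * Nt + c' mod Nt = c'" by simp
  then have H0: "H0 (receiver c) (c' div Nt) (antenna c) (c' mod Nt) =
      (if receiver c' = receiver c \<and> antenna c' = antenna c then 1 else 0)"
    unfolding H0_def using assms Nt_pos by auto
  show ?thesis unfolding blockC_entry_def row_of_decode[OF assms(1)] transmitter_def H0 ..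
qed

lemma segment_adjacent:
  assumes "c \<noteq> c'" "receiver c' = receiver c" "antenna c' = antenna c"
    and "transmitter c'' = transmitter c'" "receiver c'' = receiver c" "segment c'' = segment c"
  shows "segment c' = Suc (segment c) \<or> Suc (segment c') = segment c"
proof -
  have "segment c' \<noteq> segment c"
  proof
    assume "segment c' = segment c"
    then have "c' div Kr = c div Kr" using assms(3) div_Kr_eq by simp
    with assms(1,2) eq_if_same_div_Kr show False by blast
  qed
  moreover have "segment c' \<le> Suc (segment c)" "segment c \<le> Suc (segment c')"
    using segment_le_Suc_if_same_transmitter[of c' c''] segment_le_Suc_if_same_transmitter[of c'' c'] assms
    by auto
  ultimately show ?thesis by linarith
qed

lemma not_has_next_if_next_segment:
  assumes "segment c' = Suc (segment c)" "receiver c' = receiver c" "antenna c' = antenna c"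
    and "transmitter c'' = transmitter c'" "segment c'' = segment c"
  shows "\<not> has_next c"
proof
  assume "has_next c"
  then obtain c3 where c3: "transmitter c3 = transmitter c" "segment c3 = Suc (segment c)"
    unfolding has_next_def by blast
  have "c' div Kr = c div Kr + Mr" using assms(1,3) div_Kr_eq by simp
  moreover have "c' = c' div Kr * Kr + receiver c'" "c = c div Kr * Kr + receiver c"
    unfolding receiver_def by simp_all
  ultimately have "c' = c + Kr * Mr"
    using assms(2) by (simp add: algebra_simps)
  then have "(c + Nt) div Nt \<le> c' div Nt" using Nt_le by (intro div_le_mono) simp
  then have "transmitter c < transmitter c'" using Nt_pos unfolding transmitter_def by simp
  have "c3 < c''"
  proof (rule ccontr)
    assume "\<not> c3 < c''"
    then have "transmitter c'' \<le> transmitter c3" by (intro transmitter_mono) simp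
    with \<open>transmitter c < transmitter c'\<close> c3(1) assms(4) show False by simp
  qed
  then have "segment c3 \<le> segment c''" by (intro segment_mono) simp
  then show False using c3(2) assms(5) by simp
qed

lemma key_lt:
  assumes "c < m" "c' < m" "c \<noteq> c'" "receiver c' = receiver c" "antenna c' = antenna c"
    and "c'' < m" "transmitter c'' = transmitter c'" "receiver c'' = receiver c" "segment c'' = segment c"
  shows "key c' < key c"
  using segment_adjacent[OF assms(3-5) assms(7-9)]
proof
  assume next': "segment c' = Suc (segment c)"
  then have "has_prev c'" unfolding has_prev_def using assms(4,6-9) by (metis (full_types))
  then have "key c' = 2 * L - segment c'"
    unfolding key_def using not_has_next_and_has_prev by auto
  moreover have "\<not> has_next c"
    using not_has_next_if_next_segment[OF next' assms(4,5,7,9)] .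
  ultimately show ?thesis
    unfolding key_def using next' segment_lt[OF assms(2)] by auto
next
  assume prev: "Suc (segment c') = segment c"
  then have "has_next c'" unfolding has_next_def using assms(4,6-9) by (metis (full_types))
  then show ?thesis
    unfolding key_def using prev segment_lt[OF assms(1)] by auto
qed

lemma R_subset: "R \<subseteq> {..<Kr * L * Mr}"
  unfolding R_def using row_of_lt by auto

lemma card_R: "card R = m"
  unfolding R_def using inj_on_row_of by (simp add: card_image)

lemma det_witness:
  "det (submatrix (Matrix.mat (Kr * L * Mr) (Kt * Nt) (\<lambda>(r, c). blockC_entry L Mr Nt H0 g0 r c)) R {..<m}) \<noteq> 0"
proof -
  define \<sigma> where "\<sigma> c = card {r \<in> R. r < row_of c}" for c
  have \<sigma>: "\<sigma> c < m \<and> pick R (\<sigma> c) = row_of c" if "c < m" for c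
  proof -
    have "row_of c \<in> R" unfolding R_def using that by simp
    moreover have "finite R" unfolding R_def by simp
    ultimately have "\<sigma> c < card R"
      unfolding \<sigma>_def by (intro psubset_card_mono) auto
    then show ?thesis
      using card_R \<open>row_of c \<in> R\<close> unfolding \<sigma>_def by (simp add: pick_card_in_set)
  qed
  have "det (Matrix.mat m m (\<lambda>(i, c). blockC_entry L Mr Nt H0 g0 (pick R i) c)) \<noteq> 0"
  proof (rule det_ne_0_if_triangular_wrt[where \<sigma> = \<sigma> and key = key])
    fix c assume "c < m"
    then show "\<sigma> c < m \<and> Matrix.mat m m (\<lambda>(i, c). blockC_entry L Mr Nt H0 g0 (pick R i) c) $$ (\<sigma> c, c) \<noteq> 0"
      using \<sigma> by (auto simp: witness_entry g0_def)
  next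
    fix c c' assume "c < m" "c' < m" "c' \<noteq> c"
      and "Matrix.mat m m (\<lambda>(i, c). blockC_entry L Mr Nt H0 g0 (pick R i) c) $$ (\<sigma> c, c') \<noteq> 0"
    then show "key c' < key c"
      using \<sigma> key_lt[OF \<open>c < m\<close> \<open>c' < m\<close>] by (auto simp: witness_entry g0_def split: if_splits)
  qed simp
  then show ?thesis
    using R_subset card_R by (subst submatrix_mat_lessThan) (auto simp: m_def)
qed

end

section \<open>Almost sure full rank\<close>

definition blockC_vars :: "nat \<Rightarrow> nat \<Rightarrow> nat \<Rightarrow> nat \<Rightarrow> nat \<Rightarrow> (nat \<times> nat \<times> nat \<times> nat + nat \<times> nat \<times> nat) set" where
  "blockC_vars Kr Kt Mr Nt \<kappa> =
     {Inl (j, k, a, b) | j k a b. j < Kr \<and> k < Kt \<and> a < Mr \<and> b < Nt} \<union>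
     {Inr (i, j, k) | i j k. i < Kt - \<kappa> \<and> j < Kr \<and> k < Kt}"

definition blockC_at ::
  "nat \<Rightarrow> nat \<Rightarrow> nat \<Rightarrow> nat \<Rightarrow> nat \<Rightarrow> (nat \<times> nat \<times> nat \<times> nat + nat \<times> nat \<times> nat \<Rightarrow> complex) \<Rightarrow> complex mat" where
  "blockC_at Kr Kt Mr Nt \<kappa> x = blockC Kr Kt Mr Nt \<kappa> (\<lambda>j k a b. x (Inl (j, k, a, b))) (\<lambda>i j k. x (Inr (i, j, k)))"

lemma finite_blockC_vars: "finite (blockC_vars Kr Kt Mr Nt \<kappa>)"
proof -
  have "blockC_vars Kr Kt Mr Nt \<kappa> \<subseteq>
      Inl ` ({..<Kr} \<times> {..<Kt} \<times> {..<Mr} \<times> {..<Nt}) \<union> Inr ` ({..<Kt - \<kappa>} \<times> {..<Kr} \<times> {..<Kt})"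
    unfolding blockC_vars_def by auto
  then show ?thesis by (rule finite_subset) simp
qed

lemma blockC_at_restrict:
  "blockC_at Kr Kt Mr Nt \<kappa> (restrict x (blockC_vars Kr Kt Mr Nt \<kappa>)) = blockC_at Kr Kt Mr Nt \<kappa> x"
  unfolding blockC_at_def blockC_vars_def by (rule blockC_cong) auto

lemma det_submatrix_blockC_at_eq:
  assumes "R \<subseteq> {..<Kr * (Kt - \<kappa>) * Mr}" "card R = m" "m \<le> Kt * Nt"
  shows "det (submatrix (blockC_at Kr Kt Mr Nt \<kappa> x) R {..<m}) =
    det (Matrix.mat m m (\<lambda>(i, j). blockC_entry (Kt - \<kappa>) Mr Nt
      (\<lambda>j k a b. x (Inl (j, k, a, b))) (\<lambda>i j k. x (Inr (i, j, k))) (pick R i) j))"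
  unfolding blockC_at_def blockC_eq_mat using assms by (simp add: submatrix_mat_lessThan)

lemma separately_poly_det_submatrix_blockC_at:
  assumes "R \<subseteq> {..<Kr * (Kt - \<kappa>) * Mr}" "card R = m" "m \<le> Kt * Nt"
  shows "separately_poly I (\<lambda>x. det (submatrix (blockC_at Kr Kt Mr Nt \<kappa> x) R {..<m}))"
  unfolding det_submatrix_blockC_at_eq[OF assms] blockC_entry_def
  by (intro separately_poly_det) auto

lemma borel_measurable_det_submatrix_blockC_at:
  assumes "R \<subseteq> {..<Kr * (Kt - \<kappa>) * Mr}" "card R = m" "m \<le> Kt * Nt"
  shows "(\<lambda>x. det (submatrix (blockC_at Kr Kt Mr Nt \<kappa> x) R {..<m})) \<in> borel_measurable (PiM I (\<lambda>_. borel))"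
  unfolding det_submatrix_blockC_at_eq[OF assms] blockC_entry_def
  by (intro borel_measurable_det borel_measurable_times borel_measurable_PiM_component)

lemma AE_det_submatrix_blockC_at_ne_0:
  fixes X :: "nat \<times> nat \<times> nat \<times> nat + nat \<times> nat \<times> nat \<Rightarrow> 'w \<Rightarrow> complex"
  assumes "prob_space M"
    and indep: "prob_space.indep_vars M (\<lambda>_. borel) X (blockC_vars Kr Kt Mr Nt \<kappa>)"
    and nonempty: "blockC_vars Kr Kt Mr Nt \<kappa> \<noteq> {}"
    and atomless: "\<And>u z. u \<in> blockC_vars Kr Kt Mr Nt \<kappa> \<Longrightarrow> emeasure M {w \<in> space M. X u w = z} = 0"
    and R: "R \<subseteq> {..<Kr * (Kt - \<kappa>) * Mr}" "card R = m" "m \<le> Kt * Nt"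
    and witness: "det (submatrix (blockC_at Kr Kt Mr Nt \<kappa> x0) R {..<m}) \<noteq> 0"
  shows "AE w in M. det (submatrix (blockC_at Kr Kt Mr Nt \<kappa> (\<lambda>u. X u w)) R {..<m}) \<noteq> 0"
proof -
  interpret P: prob_space M by fact
  define I where "I = blockC_vars Kr Kt Mr Nt \<kappa>"
  define F where "F x = det (submatrix (blockC_at Kr Kt Mr Nt \<kappa> x) R {..<m})" for x
  have X_meas: "X u \<in> borel_measurable M" if "u \<in> I" for u
    using indep that unfolding P.indep_vars_def2 I_def by auto
  have F_meas: "F \<in> borel_measurable (PiM I (\<lambda>_. borel))"
    unfolding F_def using R by (rule borel_measurable_det_submatrix_blockC_at)
  have "AE x in PiM I (\<lambda>u. distr M borel (X u)). F x \<noteq> 0"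
  proof (rule AE_PiM_nonzero_if_separately_poly)
    show "finite I" unfolding I_def by (rule finite_blockC_vars)
    show "separately_poly I F"
      unfolding F_def using R by (rule separately_poly_det_submatrix_blockC_at)
    have "sets (PiM I (\<lambda>u. distr M borel (X u))) = sets (PiM I (\<lambda>_. borel))"
      by (rule sets_PiM_cong) auto
    with F_meas show "F \<in> borel_measurable (PiM I (\<lambda>u. distr M borel (X u)))"
      by (subst measurable_cong_sets[OF _ refl])
    show "restrict x0 I \<in> space (PiM I (\<lambda>u. distr M borel (X u)))"
      by (simp add: space_PiM)
    show "F (restrict x0 I) \<noteq> 0"
      using witness unfolding F_def I_def blockC_at_restrict .
    show "prob_space (distr M borel (X u))" "sets (distr M borel (X u)) = sets borel" if "u \<in> I" for u
      using P.prob_space_distr[OF X_meas[OF that]] by simp_all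
    show "emeasure (distr M borel (X u)) {z} = 0" if "u \<in> I" for u z
      using atomless[OF that[unfolded I_def]] by (simp add: emeasure_distr_singleton X_meas[OF that])
  qed
  then have "AE w in M. F (\<lambda>u\<in>I. X u w) \<noteq> 0"
    using F_meas indep nonempty unfolding I_def by (intro P.AE_indep_vars_of_AE_PiM) measurable
  then show ?thesis
    unfolding F_def I_def blockC_at_restrict .
qed

theorem lemma2:
  fixes M :: "'w measure"
    and Kr Kt Mr Nt \<kappa> :: nat
    and H :: "nat \<Rightarrow> nat \<Rightarrow> nat \<Rightarrow> nat \<Rightarrow> 'w \<Rightarrow> complex"
    and \<gamma> :: "nat \<Rightarrow> nat \<Rightarrow> nat \<Rightarrow> 'w \<Rightarrow> complex"
  assumes "prob_space M"
    and "Kr > 0" and "Kt > 0" and "Mr > 0" and "Nt > 0"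
    and "\<kappa> \<le> Kt - 1"
    and gauss: "\<And>j k a b. j < Kr \<Longrightarrow> k < Kt \<Longrightarrow> a < Mr \<Longrightarrow> b < Nt \<Longrightarrow>
                  std_circ_gaussian M (H j k a b)"
    and gamma_id: "\<And>i j k i' j' k'. i < Kt - \<kappa> \<Longrightarrow> j < Kr \<Longrightarrow> k < Kt \<Longrightarrow>
                  i' < Kt - \<kappa> \<Longrightarrow> j' < Kr \<Longrightarrow> k' < Kt \<Longrightarrow>
                  distr M borel (\<gamma> i j k) = distr M borel (\<gamma> i' j' k')"
    and gamma_cont: "\<And>i j k z. i < Kt - \<kappa> \<Longrightarrow> j < Kr \<Longrightarrow> k < Kt \<Longrightarrow>
                  measure M {w \<in> space M. \<gamma> i j k w = z} = 0"
    and indep: "prob_space.indep_vars M (\<lambda>_. borel)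
                  (\<lambda>x. case x of Inl (j, k, a, b) \<Rightarrow> H j k a b | Inr (i, j, k) \<Rightarrow> \<gamma> i j k)
                  ({Inl (j, k, a, b) | j k a b. j < Kr \<and> k < Kt \<and> a < Mr \<and> b < Nt} \<union>
                   {Inr (i, j, k) | i j k. i < Kt - \<kappa> \<and> j < Kr \<and> k < Kt})"
    and "Nt \<le> Kr * Mr"
  shows "AE w in M. mat_rank (blockC Kr Kt Mr Nt \<kappa> (\<lambda>j k a b. H j k a b w) (\<lambda>i j k. \<gamma> i j k w))
                    = min (Kr * (Kt - \<kappa>) * Mr) (Kt * Nt)"
proof -
  interpret P: prob_space M by fact
  interpret W: blockC_witness Kr Kt Mr Nt "Kt - \<kappa>"
    using assms(2,4,5,11) by unfold_locales auto
  let ?X = "\<lambda>u. case u of Inl (j, k, a, b) \<Rightarrow> H j k a b | Inr (i, j, k) \<Rightarrow> \<gamma> i j k"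
  have "emeasure M {w \<in> space M. ?X u w = z} = 0" if "u \<in> blockC_vars Kr Kt Mr Nt \<kappa>" for u z
  proof (cases u)
    case Inl
    with that show ?thesis by (auto simp: blockC_vars_def intro: std_circ_gaussian_atomless gauss)
  next
    case Inr
    with that show ?thesis by (auto simp: blockC_vars_def P.emeasure_eq_measure gamma_cont)
  qed
  moreover have "blockC_vars Kr Kt Mr Nt \<kappa> \<noteq> {}"
    unfolding blockC_vars_def using assms(2-5) by blast
  moreover have "det (submatrix (blockC_at Kr Kt Mr Nt \<kappa>
      (\<lambda>u. case u of Inl (j, k, a, b) \<Rightarrow> W.H0 j k a b | Inr (i, j, k) \<Rightarrow> W.g0 i j k)) W.R {..<W.m}) \<noteq> 0"
    using W.det_witness by (simp add: blockC_at_def blockC_eq_mat)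
  ultimately have "AE w in M. det (submatrix (blockC_at Kr Kt Mr Nt \<kappa> (\<lambda>u. ?X u w)) W.R {..<W.m}) \<noteq> 0"
    using indep W.R_subset W.card_R
    by (intro AE_det_submatrix_blockC_at_ne_0[OF assms(1)]) (auto simp: blockC_vars_def W.m_def)
  then show ?thesis
    by (elim eventually_mono, intro mat_rank_eq_min_if_det_submatrix_ne_0[where R = W.R])
      (simp_all add: blockC_at_def W.m_def blockC_def)
qed

end
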